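(* For all $n\ge 3$, $|F_n(321,1324)|=\frac{3}{2}n^2-\frac{13}{2}n+10$.
   Context: A permutation $\pi$ avoids a classical pattern $p\in S_k$ if no subsequence of $\pi$ of length $k$ is order-isomorphic to $p$. A Fishburn permutation is a permutation $\pi=\pi_1\cdots\pi_n$ of $[n]$ for which there are no indices $i<j$ with $\pi_j<\pi_i<\pi_{i+1}$ and $\pi_i=\pi_j+1$. $F_n(\sigma_1,\dots,\sigma_k)$ denotes the set of Fishburn permutations of length $n$ avoiding each of the classical patterns $\sigma_1,\dots,\sigma_k$. *)

theory Defs
  imports Complex_Main
begin

definition perms :: "nat \<Rightarrow> nat list set" where
  "perms n = {xs. distinct xs \<and> set xs = {1..n}}"

definition contains :: "nat list \<Rightarrow> nat list \<Rightarrow> bool" where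
  "contains xs p \<longleftrightarrow> (\<exists>f :: nat \<Rightarrow> nat.
      (\<forall>a b. a < b \<and> b < length p \<longrightarrow> f a < f b) \<and>
      (\<forall>a < length p. f a < length xs) \<and>
      (\<forall>a < length p. \<forall>b < length p. (xs ! f a < xs ! f b \<longleftrightarrow> p ! a < p ! b)))"

definition avoids :: "nat list \<Rightarrow> nat list \<Rightarrow> bool" where
  "avoids xs p \<longleftrightarrow> \<not> contains xs p"

definition fishburn :: "nat list \<Rightarrow> bool" where
  "fishburn xs \<longleftrightarrow> \<not> (\<exists>i j. i < j \<and> j < length xs \<and> Suc i < length xs \<and>
      xs ! j < xs ! i \<and> xs ! i < xs ! Suc i \<and> xs ! i = xs ! j + 1)"

definition Fish :: "nat \<Rightarrow> nat list list \<Rightarrow> nat list set" where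
  "Fish n ps = {xs \<in> perms n. fishburn xs \<and> (\<forall>p \<in> set ps. avoids xs p)}"

end

theory Submission
  imports Defs
begin

text \<open>
  Let \<open>\<pi>\<close> be a Fishburn permutation avoiding 321 and 1324, with first entry \<open>m\<close>.
  If \<open>m > 1\<close>, the Fishburn condition for \<open>m\<close> and \<open>m - 1\<close> forces a descent after \<open>m\<close>,
  and 321-avoidance then puts 1 in the second position.  After the entry 1, let \<open>a\<close> be the
  first position whose entry has a smaller entry to its right.  If there is none, \<open>\<pi>\<close> is \<open>m\<close>
  followed by the other values in increasing order.  If \<open>\<pi>(a) \<noteq> m + 1\<close>, the Fishburn
  condition for \<open>\<pi>(a)\<close> and \<open>\<pi>(a) - 1\<close> makes \<open>a\<close> a descent, and the pattern conditions
  force \<open>\<pi>(a) = n\<close>: \<open>\<pi>\<close> is \<open>m, 1, 2, \<dots>\<close> with \<open>n\<close> inserted.  If \<open>\<pi>(a) = m + 1\<close>, the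
  entries from \<open>a\<close> up to the next smaller one are \<open>m + 1, \<dots>, n\<close>, so that
  \<open>\<pi> = m, 1, \<dots>, j, m + 1, \<dots>, n, j + 1, \<dots>, m - 1\<close>.  The first two shapes give
  \<open>n + (n - 2)\<^sup>2\<close> permutations, the last one (for \<open>m + 1 < n\<close>) \<open>(n - 3)(n - 4)/2\<close>.
\<close>

section \<open>Pattern containment\<close>

lemma contains_321_iff:
  "contains xs [3,2,1] \<longleftrightarrow>
    (\<exists>a b c. a < b \<and> b < c \<and> c < length xs \<and> xs!c < xs!b \<and> xs!b < xs!a)"
proof
  assume "contains xs [3,2,1]"
  then obtain f where "\<forall>a b. a < b \<and> b < 3 \<longrightarrow> f a < f b" "\<forall>a < 3. f a < length xs"
    "\<forall>a < 3. \<forall>b < 3. xs ! f a < xs ! f b \<longleftrightarrow> [3,2,1::nat] ! a < [3,2,1] ! b"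
    unfolding contains_def by (simp add: numeral_eq_Suc) blast
  then show "\<exists>a b c. a < b \<and> b < c \<and> c < length xs \<and> xs!c < xs!b \<and> xs!b < xs!a"
    by (intro exI[of _ "f 0"] exI[of _ "f 1"] exI[of _ "f 2"]) auto
next
  assume "\<exists>a b c. a < b \<and> b < c \<and> c < length xs \<and> xs!c < xs!b \<and> xs!b < xs!a"
  then obtain a b c where "a < b" "b < c" "c < length xs" "xs!c < xs!b" "xs!b < xs!a" by blast
  then show "contains xs [3,2,1]"
    unfolding contains_def by (intro exI[of _ "(!) [a,b,c]"]) (auto simp: less_Suc_eq)
qed

lemma contains_1324_iff:
  "contains xs [1,3,2,4] \<longleftrightarrow>
    (\<exists>a b c d. a < b \<and> b < c \<and> c < d \<and> d < length xs \<and>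
      xs!a < xs!c \<and> xs!c < xs!b \<and> xs!b < xs!d)"
proof
  assume "contains xs [1,3,2,4]"
  then obtain f where "\<forall>a b. a < b \<and> b < 4 \<longrightarrow> f a < f b" "\<forall>a < 4. f a < length xs"
    "\<forall>a < 4. \<forall>b < 4. xs ! f a < xs ! f b \<longleftrightarrow> [1,3,2,4::nat] ! a < [1,3,2,4] ! b"
    unfolding contains_def by (simp add: numeral_eq_Suc) blast
  then show "\<exists>a b c d. a < b \<and> b < c \<and> c < d \<and> d < length xs \<and>
      xs!a < xs!c \<and> xs!c < xs!b \<and> xs!b < xs!d"
    by (intro exI[of _ "f 0"] exI[of _ "f 1"] exI[of _ "f 2"] exI[of _ "f 3"]) auto
next
  assume "\<exists>a b c d. a < b \<and> b < c \<and> c < d \<and> d < length xs \<and>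
      xs!a < xs!c \<and> xs!c < xs!b \<and> xs!b < xs!d"
  then obtain a b c d where "a < b" "b < c" "c < d" "d < length xs"
      "xs!a < xs!c" "xs!c < xs!b" "xs!b < xs!d" by blast
  then show "contains xs [1,3,2,4]"
    unfolding contains_def by (intro exI[of _ "(!) [a,b,c,d]"]) (auto simp: less_Suc_eq)
qed

lemma map_upt_in_Fish:
  fixes g :: "nat \<Rightarrow> nat"
  assumes range: "\<And>i. i < n \<Longrightarrow> 1 \<le> g i \<and> g i \<le> n"
    and inj: "inj_on g {..<n}"
    and no_fishburn_pair: "\<And>i j. i < j \<Longrightarrow> j < n \<Longrightarrow> g j < g i \<Longrightarrow> g i < g (Suc i) \<Longrightarrow> g i \<noteq> g j + 1"
    and no_321: "\<And>a b c. a < b \<Longrightarrow> b < c \<Longrightarrow> c < n \<Longrightarrow> g b < g a \<Longrightarrow> g c \<ge> g b"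
    and no_1324: "\<And>a b c d. a < b \<Longrightarrow> b < c \<Longrightarrow> c < d \<Longrightarrow> d < n \<Longrightarrow>
      g a < g c \<Longrightarrow> g c < g b \<Longrightarrow> g d \<le> g b"
  shows "map g [0..<n] \<in> Fish n [[3,2,1],[1,3,2,4]]"
proof -
  have "card (g ` {..<n}) = n" using card_image[OF inj] by simp
  moreover have "g ` {..<n} \<subseteq> {1..n}" using range by auto
  ultimately have "g ` {..<n} = {1..n}" by (intro card_subset_eq) auto
  then have "map g [0..<n] \<in> perms n"
    using inj by (simp add: perms_def distinct_map lessThan_atLeast0)
  moreover have "fishburn (map g [0..<n])"
    unfolding fishburn_def by (auto simp del: upt_Suc dest: no_fishburn_pair)
  moreover have "avoids (map g [0..<n]) [3,2,1]"
    unfolding avoids_def contains_321_iff by (auto simp del: upt_Suc) (metis leD no_321)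
  moreover have "avoids (map g [0..<n]) [1,3,2,4]"
    unfolding avoids_def contains_1324_iff by (auto simp del: upt_Suc) (metis leD no_1324)
  ultimately show ?thesis by (simp add: Fish_def)
qed


section \<open>The two families\<close>

text \<open>\<open>lead_enum m c\<close> is entry \<open>c\<close> (counting from 0) of the sequence \<open>m, 1, 2, \<dots>\<close> in which
  \<open>m\<close> has been moved to the front; \<open>fam_A n m k\<close> inserts \<open>n\<close> at position \<open>k\<close> into it, and
  \<open>fam_B n m j\<close> is \<open>m, 1, \<dots>, j, m + 1, \<dots>, n, j + 1, \<dots>, m - 1\<close>.\<close>

definition lead_enum :: "nat \<Rightarrow> nat \<Rightarrow> nat" where
  "lead_enum m c = (if c = 0 then m else if c < m then c else c + 1)"

definition fam_A :: "nat \<Rightarrow> nat \<Rightarrow> nat \<Rightarrow> nat \<Rightarrow> nat" where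
  "fam_A n m k i = (if i < k then lead_enum m i else if i = k then n else lead_enum m (i - 1))"

definition fam_B :: "nat \<Rightarrow> nat \<Rightarrow> nat \<Rightarrow> nat \<Rightarrow> nat" where
  "fam_B n m j i =
    (if i = 0 then m else if i \<le> j then i else if i \<le> j + (n - m) then i + m - j else i + m - n)"

definition params_A :: "nat \<Rightarrow> (nat \<times> nat) set" where
  "params_A n = {(m, k). (m = 1 \<and> k < n) \<or> (2 \<le> m \<and> m < n \<and> 2 \<le> k \<and> k < n)}"

definition params_B :: "nat \<Rightarrow> (nat \<times> nat) set" where
  "params_B n = {(m, j). 3 \<le> m \<and> m + 2 \<le> n \<and> 1 \<le> j \<and> j + 2 \<le> m}"

definition fish_A :: "nat \<Rightarrow> nat list set" where
  "fish_A n = (\<lambda>(m, k). map (fam_A n m k) [0..<n]) ` params_A n"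

definition fish_B :: "nat \<Rightarrow> nat list set" where
  "fish_B n = (\<lambda>(m, j). map (fam_B n m j) [0..<n]) ` params_B n"

lemma fam_A_inversion:
  assumes "(m, k) \<in> params_A n" "i < j" "j < n" "fam_A n m k j < fam_A n m k i"
  shows "i = 0 \<or> fam_A n m k i = n"
  using assms unfolding fam_A_def lead_enum_def params_A_def by (auto split: if_splits)

lemma fam_A_in_Fish:
  assumes mk: "(m, k) \<in> params_A n"
  shows "map (fam_A n m k) [0..<n] \<in> Fish n [[3,2,1],[1,3,2,4]]"
proof (rule map_upt_in_Fish)
  let ?g = "fam_A n m k"
  show range: "1 \<le> ?g i \<and> ?g i \<le> n" if "i < n" for i
    using mk that unfolding fam_A_def lead_enum_def params_A_def by (auto split: if_splits)
  show "inj_on ?g {..<n}"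
    using mk unfolding inj_on_def fam_A_def lead_enum_def params_A_def by (auto split: if_splits)
  show "?g i \<noteq> ?g j + 1" if "i < j" "j < n" "?g j < ?g i" "?g i < ?g (Suc i)" for i j
    using fam_A_inversion[OF mk that(1-3)] range[of "Suc i"] mk that
    unfolding fam_A_def lead_enum_def params_A_def by (auto split: if_splits)
  show "?g c \<ge> ?g b" if "a < b" "b < c" "c < n" "?g b < ?g a" for a b c
    using fam_A_inversion[OF mk that(2,3)] fam_A_inversion[OF mk that(1) _ that(4)] range[of a] that
    by fastforce
  show "?g d \<le> ?g b" if "a < b" "b < c" "c < d" "d < n" "?g a < ?g c" "?g c < ?g b" for a b c d
    using fam_A_inversion[OF mk that(2) _ that(6)] range[of d] that by auto
qed

lemma fam_B_inversion:
  assumes "(m, j) \<in> params_B n" "i < i'" "i' < n" "fam_B n m j i' < fam_B n m j i"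
  shows "(i = 0 \<and> \<not> (j < i' \<and> i' \<le> j + (n - m))) \<or> (j < i \<and> i \<le> j + (n - m) \<and> j + (n - m) < i')"
  using assms unfolding fam_B_def params_B_def by (auto split: if_splits)

lemma fam_B_in_Fish:
  assumes mj: "(m, j) \<in> params_B n"
  shows "map (fam_B n m j) [0..<n] \<in> Fish n [[3,2,1],[1,3,2,4]]"
proof (rule map_upt_in_Fish)
  let ?g = "fam_B n m j"
  show "1 \<le> ?g i \<and> ?g i \<le> n" if "i < n" for i
    using mj that unfolding fam_B_def params_B_def by (auto split: if_splits)
  show "inj_on ?g {..<n}"
    using mj unfolding inj_on_def fam_B_def params_B_def by (auto split: if_splits)
  show "?g i \<noteq> ?g i' + 1" if "i < i'" "i' < n" "?g i' < ?g i" "?g i < ?g (Suc i)" for i i'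
    using fam_B_inversion[OF mj that(1-3)] mj that
    unfolding fam_B_def params_B_def by (auto split: if_splits)
  show "?g c \<ge> ?g b" if "a < b" "b < c" "c < n" "?g b < ?g a" for a b c
    using fam_B_inversion[OF mj that(2,3)] fam_B_inversion[OF mj that(1) _ that(4)] that by fastforce
  show "?g d \<le> ?g b" if "a < b" "b < c" "c < d" "d < n" "?g a < ?g c" "?g c < ?g b" for a b c d
    using fam_B_inversion[OF mj that(2) _ that(6)] mj that
    unfolding fam_B_def params_B_def by (auto split: if_splits)
qed

lemma inj_on_fam_A: "inj_on (\<lambda>(m, k). map (fam_A n m k) [0..<n]) (params_A n)"
proof (rule inj_onI, clarify)
  fix m k m' k'
  assume mk: "(m, k) \<in> params_A n" "(m', k') \<in> params_A n"
    and eq: "map (fam_A n m k) [0..<n] = map (fam_A n m' k') [0..<n]"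
  have at: "fam_A n m k i = fam_A n m' k' i" if "i < n" for i
    using arg_cong[OF eq, of "\<lambda>xs. xs ! i"] that by simp
  have "k < n" using mk(1) by (auto simp: params_A_def)
  then have "fam_A n m' k' k = n" using at[of k] by (simp add: fam_A_def)
  then have "k = k'" using mk \<open>k < n\<close> unfolding fam_A_def lead_enum_def params_A_def by (auto split: if_splits)
  moreover have "m = m'"
  proof (cases "k = 0")
    case True then show ?thesis using mk \<open>k = k'\<close> by (auto simp: params_A_def)
  next
    case False
    then show ?thesis using at[of 0] \<open>k < n\<close> \<open>k = k'\<close> by (simp add: fam_A_def lead_enum_def)
  qed
  ultimately show "m = m' \<and> k = k'" by simp
qed

lemma inj_on_fam_B: "inj_on (\<lambda>(m, j). map (fam_B n m j) [0..<n]) (params_B n)"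
proof (rule inj_onI, clarify)
  fix m j m' j'
  assume mj: "(m, j) \<in> params_B n" "(m', j') \<in> params_B n"
    and eq: "map (fam_B n m j) [0..<n] = map (fam_B n m' j') [0..<n]"
  have at: "fam_B n m j i = fam_B n m' j' i" if "i < n" for i
    using arg_cong[OF eq, of "\<lambda>xs. xs ! i"] that by simp
  have "m = m'" using at[of 0] mj(1) by (auto simp: params_B_def fam_B_def)
  moreover have "\<not> j < j'" "\<not> j' < j"
    using at[of "j + 1"] at[of "j' + 1"] mj \<open>m = m'\<close> unfolding fam_B_def params_B_def
    by (auto split: if_splits)
  ultimately show "m = m' \<and> j = j'" by simp
qed

lemma fish_A_fish_B_disjoint:
  assumes "n \<ge> 3"
  shows "fish_A n \<inter> fish_B n = {}"
proof -
  have "fam_A n m k (n - 1) \<noteq> fam_B n m' j (n - 1)"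
    if "(m, k) \<in> params_A n" "(m', j) \<in> params_B n" for m k m' j
    using that assms unfolding fam_A_def lead_enum_def fam_B_def params_A_def params_B_def
    by (auto split: if_splits)
  then show ?thesis
    unfolding fish_A_def fish_B_def using assms
    by (fastforce dest: arg_cong[where f = "\<lambda>xs. xs ! (n - 1)"])
qed

lemma card_params_A: "card (params_A n) = n + (n - 2) * (n - 2)"
proof -
  have "params_A n = {1} \<times> {..<n} \<union> {2..<n} \<times> {2..<n}" by (auto simp: params_A_def)
  moreover have "card ({1} \<times> {..<n} \<union> {2..<n} \<times> {2..<n}) = n + (n - 2) * (n - 2)"
    by (subst card_Un_disjoint) (auto simp: card_cartesian_product)
  ultimately show ?thesis by simp
qed

lemma double_sum_minus_2: "2 * (\<Sum>m = 3..<N. m - 2) = (N - 3) * (N - 2 :: nat)"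
proof (induction N)
  case (Suc N)
  show ?case
  proof (cases "N \<ge> 3")
    case True
    then have "2 * (\<Sum>m = 3..<Suc N. m - 2) = 2 * (N - 2) + (N - 3) * (N - 2)"
      using Suc by simp
    also have "\<dots> = (Suc N - 3) * (Suc N - 2)"
      using True by (auto simp: algebra_simps dest!: le_Suc_ex)
    finally show ?thesis .
  qed (auto simp: not_le less_Suc_eq)
qed simp

lemma double_card_params_B: "2 * card (params_B n) = (n - 4) * (n - 3)"
proof -
  have "params_B n = (SIGMA m:{3..<n - 1}. {1..<m - 1})" by (auto simp: params_B_def)
  then have "card (params_B n) = (\<Sum>m = 3..<n - 1. m - 2)" by (simp add: numeral_2_eq_2)
  then show ?thesis using double_sum_minus_2[of "n - 1"] by (simp add: numeral_eq_Suc)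
qed

section \<open>Structure of the avoiders\<close>

lemma fish_AI: "(m, k) \<in> params_A n \<Longrightarrow> xs = map (fam_A n m k) [0..<n] \<Longrightarrow> xs \<in> fish_A n"
  unfolding fish_A_def by (rule image_eqI[of _ _ "(m, k)"]) auto

lemma fish_BI: "(m, j) \<in> params_B n \<Longrightarrow> xs = map (fam_B n m j) [0..<n] \<Longrightarrow> xs \<in> fish_B n"
  unfolding fish_B_def by (rule image_eqI[of _ _ "(m, j)"]) auto

locale fish_321_1324 =
  fixes xs :: "nat list" and n :: nat
  assumes n_ge_3: "n \<ge> 3" and mem_Fish: "xs \<in> Fish n [[3,2,1],[1,3,2,4]]"
begin

lemma distinct_xs: "distinct xs" and set_xs: "set xs = {1..n}"
  using mem_Fish by (auto simp: Fish_def perms_def)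

lemma length_xs: "length xs = n"
  using distinct_card[OF distinct_xs] set_xs by simp

lemma nth_bounds: "i < n \<Longrightarrow> 1 \<le> xs ! i \<and> xs ! i \<le> n"
  using nth_mem[of i xs] set_xs length_xs by auto

lemma nth_inj: "i < n \<Longrightarrow> j < n \<Longrightarrow> xs ! i = xs ! j \<Longrightarrow> i = j"
  using nth_eq_iff_index_eq[OF distinct_xs] length_xs by auto

lemma nth_surj: "1 \<le> v \<Longrightarrow> v \<le> n \<Longrightarrow> \<exists>i<n. xs ! i = v"
  using set_xs length_xs by (metis atLeastAtMost_iff in_set_conv_nth)

lemma nth_less_if_not_greater: "i < n \<Longrightarrow> j < n \<Longrightarrow> i \<noteq> j \<Longrightarrow> \<not> xs ! j < xs ! i \<Longrightarrow> xs ! i < xs ! j"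
  using nth_inj by (metis linorder_neqE_nat)

lemma no_321:
  assumes "a < b" "b < c" "c < n" "xs ! b < xs ! a" "xs ! c < xs ! b"
  shows False
proof -
  have "\<not> contains xs [3,2,1]" using mem_Fish by (simp add: Fish_def avoids_def)
  then show False unfolding contains_321_iff using assms length_xs by blast
qed

lemma no_1324:
  assumes "a < b" "b < c" "c < d" "d < n" "xs ! a < xs ! c" "xs ! c < xs ! b" "xs ! b < xs ! d"
  shows False
proof -
  have "\<not> contains xs [1,3,2,4]" using mem_Fish by (simp add: Fish_def avoids_def)
  then show False unfolding contains_1324_iff using assms length_xs by blast
qed

lemma no_fishburn_pair:
  assumes "i < j" "j < n" "xs ! j < xs ! i" "xs ! i < xs ! Suc i" "xs ! i = xs ! j + 1"
  shows False
  using mem_Fish assms length_xs unfolding Fish_def fishburn_def by force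

lemma nth_eq_card_less:
  assumes "i < n"
  shows "xs ! i = card {j. j < n \<and> xs ! j < xs ! i} + 1"
proof -
  let ?S = "{j. j < n \<and> xs ! j < xs ! i}"
  have "inj_on ((!) xs) ?S" using nth_inj by (auto simp: inj_on_def)
  moreover have "(!) xs ` ?S = {1..<xs ! i}"
  proof
    show "(!) xs ` ?S \<subseteq> {1..<xs ! i}" using nth_bounds by auto
    show "{1..<xs ! i} \<subseteq> (!) xs ` ?S"
      using nth_surj nth_bounds[OF assms] by (force simp: image_iff)
  qed
  ultimately have "card ?S = xs ! i - 1" by (metis card_atLeastLessThan card_image)
  then show ?thesis using nth_bounds[OF assms] by simp
qed

lemma nth_eq_card_Suc:
  assumes "i < n" "S \<subseteq> {..<n}" "\<And>j. j < n \<Longrightarrow> xs ! j < xs ! i \<longleftrightarrow> j \<in> S"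
  shows "xs ! i = card S + 1"
proof -
  have "{j. j < n \<and> xs ! j < xs ! i} = S" using assms(2,3) by auto
  then show ?thesis using nth_eq_card_less[OF assms(1)] by simp
qed

lemma xs_eq_map: "(\<And>i. i < n \<Longrightarrow> xs ! i = g i) \<Longrightarrow> xs = map g [0..<n]"
  using length_xs by (intro nth_equalityI) auto

lemma nth_1_eq_1_if_nth_0_neq_1:
  assumes "xs ! 0 \<noteq> 1"
  shows "xs ! 1 = 1"
proof -
  have first_ge_2: "xs ! 0 \<ge> 2" using nth_bounds[of 0] n_ge_3 assms by auto
  then have "1 \<le> xs ! 0 - 1" "xs ! 0 - 1 \<le> n" using nth_bounds[of 0] n_ge_3 by auto
  then obtain t where t: "t < n" "xs ! t = xs ! 0 - 1" using nth_surj by blast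
  then have "0 < t" using first_ge_2 by (cases t) auto
  moreover have "xs ! t < xs ! 0" "xs ! 0 = xs ! t + 1" using t first_ge_2 by auto
  ultimately have "\<not> xs ! 0 < xs ! 1" using no_fishburn_pair[of 0 t] t(1) by (metis One_nat_def)
  then have dip: "xs ! 1 < xs ! 0" using nth_less_if_not_greater[of 1 0] n_ge_3 by auto
  show "xs ! 1 = 1"
  proof (rule ccontr)
    assume "xs ! 1 \<noteq> 1"
    obtain s where s: "s < n" "xs ! s = 1" using nth_surj[of 1] n_ge_3 by auto
    moreover have "s \<noteq> 0" "s \<noteq> 1" using s assms \<open>xs ! 1 \<noteq> 1\<close> by metis+
    ultimately have "1 < s" by linarith
    then show False
      using no_321[of 0 1 s] dip s \<open>xs ! 1 \<noteq> 1\<close> nth_bounds[of 1] n_ge_3 by auto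
  qed
qed

lemma nth_eq_lead_enum:
  assumes incr: "\<And>a b. 0 < a \<Longrightarrow> a < b \<Longrightarrow> b < n \<Longrightarrow> xs ! a < xs ! b" and "i < n"
  shows "xs ! i = lead_enum (xs ! 0) i"
proof (cases "i = 0")
  case False
  let ?S = "if xs ! 0 < xs ! i then {0..<i} else {1..<i}"
  have "xs ! i = card ?S + 1"
  proof (rule nth_eq_card_Suc)
    show "?S \<subseteq> {..<n}" using \<open>i < n\<close> by auto
    show "xs ! j < xs ! i \<longleftrightarrow> j \<in> ?S" if "j < n" for j
      using incr[of j i] incr[of i j] that False \<open>i < n\<close> by (cases "j = 0"; cases j i rule: linorder_cases) auto
  qed fact
  moreover have "xs ! i \<noteq> xs ! 0" using nth_inj[of i 0] False \<open>i < n\<close> by auto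
  ultimately show ?thesis using False by (auto simp: lead_enum_def split: if_splits)
qed (simp add: lead_enum_def)

definition one_pos :: nat where
  "one_pos = (if xs ! 0 = 1 then 0 else 1)"

lemma nth_one_pos: "xs ! one_pos = 1"
  using nth_1_eq_1_if_nth_0_neq_1 by (simp add: one_pos_def)

lemma one_pos_le_1: "one_pos \<le> 1"
  by (simp add: one_pos_def)

lemma nth_gt_1: "i < n \<Longrightarrow> i \<noteq> one_pos \<Longrightarrow> 1 < xs ! i"
proof -
  assume "i < n" "i \<noteq> one_pos"
  moreover have "one_pos < n" using one_pos_le_1 n_ge_3 by simp
  ultimately have "xs ! i \<noteq> 1" using nth_inj nth_one_pos by metis
  then show ?thesis using nth_bounds[OF \<open>i < n\<close>] by simp
qed

lemma no_213_after_one: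
  assumes "one_pos < a" "a < b" "b < c" "c < n" "xs ! b < xs ! a" "xs ! a < xs ! c"
  shows False
  using no_1324[of one_pos a b c] nth_one_pos nth_gt_1[of b] assms by auto

lemma increasing_below_first:
  assumes "0 < a" "a < b" "b < n" "xs ! a < xs ! 0" "xs ! b < xs ! 0"
  shows "xs ! a < xs ! b"
  using no_321[of 0 a b] nth_less_if_not_greater[of a b] assms by auto

lemma fish_A_if_increasing_after_one:
  assumes "\<And>a b. one_pos < a \<Longrightarrow> a < b \<Longrightarrow> b < n \<Longrightarrow> xs ! a < xs ! b"
  shows "xs \<in> fish_A n"
proof -
  have "xs ! a < xs ! b" if "0 < a" "a < b" "b < n" for a b
    using assms[OF _ that(2,3)] nth_gt_1[of b] nth_one_pos one_pos_le_1 that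
    by (cases "a = one_pos") auto
  moreover define m where "m = xs ! 0"
  ultimately have lead: "xs ! i = lead_enum m i" if "i < n" for i
    using nth_eq_lead_enum that by blast
  have m: "1 \<le> m" "m \<le> n" using nth_bounds[of 0] n_ge_3 by (auto simp: m_def)
  show ?thesis
  proof (cases "m = n")
    case True
    show ?thesis
    proof (rule fish_AI)
      show "(1, 0) \<in> params_A n" using n_ge_3 by (simp add: params_A_def)
      show "xs = map (fam_A n 1 0) [0..<n]"
        using lead True by (intro xs_eq_map) (auto simp: fam_A_def lead_enum_def)
    qed
  next
    case False
    show ?thesis
    proof (rule fish_AI)
      show "(m, n - 1) \<in> params_A n" using False m n_ge_3 by (auto simp: params_A_def)
      show "xs = map (fam_A n m (n - 1)) [0..<n]"
        using lead False m by (intro xs_eq_map) (auto simp: fam_A_def lead_enum_def)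
    qed
  qed
qed

lemma increasing_after_max:
  assumes "xs ! p = n" "p < a" "a < b" "b < n"
  shows "xs ! a < xs ! b"
proof -
  have "xs ! a \<noteq> n" using nth_inj[of a p] assms by auto
  then have "xs ! a < xs ! p" using nth_bounds[of a] assms by auto
  then show ?thesis using no_321[of p a b] nth_less_if_not_greater[of a b] assms by auto
qed

end

locale first_descent = fish_321_1324 +
  fixes a0 :: nat
  assumes after_one: "one_pos < a0"
    and descent: "\<exists>b. a0 < b \<and> b < n \<and> xs ! b < xs ! a0"
    and increasing_before: "\<And>i j. one_pos < i \<Longrightarrow> i < a0 \<Longrightarrow> i < j \<Longrightarrow> j < n \<Longrightarrow> xs ! i < xs ! j"
begin

lemma Suc_a0_less: "Suc a0 < n"
  using descent by auto

lemma pred_of_a0_after_a0: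
  assumes t: "t < n" "xs ! t + 1 = xs ! a0"
    and not_successor: "\<not> (xs ! a0 = xs ! 0 + 1 \<and> 2 \<le> xs ! 0)"
  shows "a0 < t"
proof -
  obtain b where b: "a0 < b" "b < n" "xs ! b < xs ! a0" using descent by blast
  have "xs ! b \<le> xs ! t" using b t by simp
  have "t \<noteq> a0" using t by auto
  moreover have "t \<noteq> 0"
  proof
    assume "t = 0"
    then have "xs ! 0 = 1" using not_successor t nth_bounds[of 0] by auto
    then show False using \<open>xs ! b \<le> xs ! t\<close> \<open>t = 0\<close> nth_gt_1[of b] b after_one one_pos_def by auto
  qed
  moreover have "t \<noteq> one_pos"
    using \<open>xs ! b \<le> xs ! t\<close> nth_one_pos nth_gt_1[of b] b after_one by auto
  moreover have "\<not> (one_pos < t \<and> t < a0)"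
    using increasing_before[of t b] \<open>xs ! b \<le> xs ! t\<close> b by auto
  ultimately show ?thesis using one_pos_le_1 by linarith
qed

lemma Suc_a0_below_a0:
  assumes not_successor: "\<not> (xs ! a0 = xs ! 0 + 1 \<and> 2 \<le> xs ! 0)"
  shows "xs ! Suc a0 < xs ! a0"
proof -
  obtain b where b: "a0 < b" "b < n" "xs ! b < xs ! a0" using descent by blast
  then have "1 \<le> xs ! a0 - 1" "xs ! a0 - 1 \<le> n" using nth_bounds[of b] nth_bounds[of a0] by auto
  then obtain t where "t < n" "xs ! t = xs ! a0 - 1" using nth_surj by blast
  then have t: "t < n" "xs ! t + 1 = xs ! a0" "xs ! t < xs ! a0" using \<open>1 \<le> xs ! a0 - 1\<close> by auto
  then have "a0 < t" using pred_of_a0_after_a0 not_successor by blast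
  then have "\<not> xs ! a0 < xs ! Suc a0" using no_fishburn_pair[OF \<open>a0 < t\<close> t(1) t(3)] t(2) by auto
  then show ?thesis using nth_less_if_not_greater[of "Suc a0" a0] Suc_a0_less by auto
qed

lemma nth_a0_eq_n:
  assumes not_successor: "\<not> (xs ! a0 = xs ! 0 + 1 \<and> 2 \<le> xs ! 0)"
  shows "xs ! a0 = n"
proof (rule ccontr)
  assume "xs ! a0 \<noteq> n"
  then have below_n: "xs ! a0 < n" using nth_bounds[of a0] Suc_a0_less by auto
  have dip: "xs ! Suc a0 < xs ! a0" using Suc_a0_below_a0 not_successor .
  obtain c where c: "c < n" "xs ! c = n" using nth_surj[of n] n_ge_3 by auto
  have "c \<noteq> 0"
  proof
    assume "c = 0"
    then show False using no_321[of 0 a0 "Suc a0"] dip below_n c Suc_a0_less by auto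
  qed
  moreover have "c \<noteq> one_pos" using c nth_one_pos n_ge_3 by auto
  moreover have "\<not> (one_pos < c \<and> c < a0)"
    using increasing_before[of c "Suc a0"] c nth_bounds[of "Suc a0"] Suc_a0_less by auto
  moreover have "c \<noteq> a0" "c \<noteq> Suc a0" using c below_n dip by auto
  moreover have "\<not> Suc a0 < c"
    using no_213_after_one[of a0 "Suc a0" c] after_one dip below_n c by auto
  ultimately show False using one_pos_le_1 by linarith
qed

lemma increasing_off_0_and_a0:
  assumes max_at_a0: "xs ! a0 = n" and ji: "0 < j" "j < i" "i < n" "j \<noteq> a0" "i \<noteq> a0"
  shows "xs ! j < xs ! i"
proof -
  consider "j = one_pos" | "one_pos < j" "j < a0" | "a0 < j" using ji one_pos_le_1 by linarith
  then show ?thesis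
    using nth_one_pos nth_gt_1[of i] increasing_before[of j i] increasing_after_max[OF max_at_a0, of j i] ji
    by cases auto
qed

lemma nth_eq_lead_enum_off_a0:
  assumes max_at_a0: "xs ! a0 = n" and i: "i < n" "i \<noteq> a0"
  shows "xs ! i = lead_enum (xs ! 0) (if i < a0 then i else i - 1)"
proof (cases "i = 0")
  case False
  define m where "m = xs ! 0"
  let ?S = "(if m < xs ! i then {0..<i} else {1..<i}) - {a0}"
  have "xs ! i < n"
    using nth_bounds[of i] nth_inj[of i a0] max_at_a0 Suc_a0_less i by fastforce
  have "xs ! i = card ?S + 1"
  proof (rule nth_eq_card_Suc)
    show "xs ! j < xs ! i \<longleftrightarrow> j \<in> ?S" if "j < n" for j
      using increasing_off_0_and_a0[OF max_at_a0, of j i] increasing_off_0_and_a0[OF max_at_a0, of i j]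
        that i False max_at_a0 m_def \<open>xs ! i < n\<close>
      by (cases "j = 0"; cases "j = a0"; cases j i rule: linorder_cases) auto
  qed (use i in auto)
  moreover have "card ?S = (if m < xs ! i then i else i - 1) - (if a0 < i then 1 else 0)"
    using after_one by (auto simp: card_Diff_singleton_if)
  moreover have "xs ! i \<noteq> m" using nth_inj[of i 0] i False m_def by auto
  ultimately show ?thesis using i after_one False unfolding lead_enum_def m_def by (auto split: if_splits)
qed (use after_one in \<open>simp add: lead_enum_def\<close>)

lemma fish_A_if_max_at_a0:
  assumes max_at_a0: "xs ! a0 = n"
  shows "xs \<in> fish_A n"
proof (rule fish_AI)
  have "xs ! 0 \<noteq> n" using nth_inj[of 0 a0] max_at_a0 Suc_a0_less after_one by auto
  then show "(xs ! 0, a0) \<in> params_A n"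
    using nth_bounds[of 0] Suc_a0_less after_one n_ge_3
    by (auto simp: params_A_def one_pos_def split: if_splits)
  show "xs = map (fam_A n (xs ! 0) a0) [0..<n]"
  proof (rule xs_eq_map)
    fix i assume "i < n"
    then show "xs ! i = fam_A n (xs ! 0) a0 i"
      using nth_eq_lead_enum_off_a0[OF max_at_a0 \<open>i < n\<close>] max_at_a0 by (cases "i = a0") (auto simp: fam_A_def)
  qed
qed

end

locale successor_descent = first_descent +
  fixes b0 :: nat
  assumes shift: "xs ! a0 = xs ! 0 + 1" "2 \<le> xs ! 0"
    and b0: "a0 < b0" "b0 < n" "xs ! b0 < xs ! a0"
    and high_before_b0: "\<And>c. a0 < c \<Longrightarrow> c < b0 \<Longrightarrow> xs ! a0 \<le> xs ! c"
begin

lemma one_pos_eq_1: "one_pos = 1"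
  using shift by (simp add: one_pos_def)

lemma nth_1: "xs ! 1 = 1"
  using nth_one_pos one_pos_eq_1 by simp

lemma nth_b0_below_first: "xs ! b0 < xs ! 0"
  using b0 shift nth_inj[of b0 0] by fastforce

lemma above_first_before_b0: "a0 \<le> c \<Longrightarrow> c < b0 \<Longrightarrow> xs ! 0 < xs ! c"
  using high_before_b0[of c] shift by (cases "c = a0") auto

lemma below_first_before_a0: "0 < j \<Longrightarrow> j < a0 \<Longrightarrow> xs ! j < xs ! 0"
  using nth_1 shift increasing_before[of j b0] b0 nth_b0_below_first one_pos_eq_1
  by (cases "j = 1") auto

lemma below_first_from_b0:
  assumes "b0 \<le> c" "c < n"
  shows "xs ! c < xs ! 0"
proof (cases "c = b0")
  case False
  then have "b0 < c" using assms by simp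
  then have "\<not> xs ! c < xs ! b0" using no_321[of a0 b0 c] b0 assms by auto
  moreover have "\<not> xs ! a0 < xs ! c"
    using no_213_after_one[of a0 b0 c] after_one b0 \<open>b0 < c\<close> assms by auto
  moreover have "xs ! c \<noteq> xs ! a0" "xs ! c \<noteq> xs ! 0"
    using nth_inj[of c a0] nth_inj[of c 0] b0 \<open>b0 < c\<close> assms by auto
  ultimately show ?thesis using shift by auto
qed (use nth_b0_below_first in simp)

lemma increasing_from_a0_before_b0:
  assumes "a0 \<le> a" "a < c" "c < b0"
  shows "xs ! a < xs ! c"
proof (rule ccontr)
  assume "\<not> xs ! a < xs ! c"
  then have "xs ! c < xs ! a" using nth_less_if_not_greater[of c a] assms b0 by auto
  moreover have "xs ! b0 < xs ! c" using above_first_before_b0[of c] nth_b0_below_first assms by auto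
  ultimately show False using no_321[of a c b0] assms b0 by auto
qed

lemma increasing_from_b0:
  "b0 \<le> a \<Longrightarrow> a < c \<Longrightarrow> c < n \<Longrightarrow> xs ! a < xs ! c"
  using increasing_below_first below_first_from_b0 b0 by auto

text \<open>In value order the positions are \<open>[1, a0) < [b0, n) < {0} < [a0, b0)\<close>, each block increasing.\<close>

definition block :: "nat \<Rightarrow> nat" where
  "block j = (if j = 0 then 2 else if j < a0 then 0 else if j < b0 then 3 else 1)"

lemma less_if_block_less:
  assumes "i < n" "j < n" "block j < block i \<or> block j = block i \<and> j < i"
  shows "xs ! j < xs ! i"
  using assms b0 after_one one_pos_eq_1 nth_1 nth_gt_1[of i]
    increasing_before[of j i] increasing_from_a0_before_b0[of j i] increasing_from_b0[of j i]
    below_first_before_a0[of j] above_first_before_b0[of i] below_first_from_b0[of j]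
    above_first_before_b0[of j] below_first_from_b0[of i] below_first_before_a0[of i]
  unfolding block_def by (cases "j = 1") (auto split: if_splits)

lemma nth_eq_card_block_less:
  assumes "i < n"
  shows "xs ! i = card {j. j < n \<and> (block j < block i \<or> block j = block i \<and> j < i)} + 1"
proof (rule nth_eq_card_Suc)
  show "xs ! j < xs ! i \<longleftrightarrow> j \<in> {j. j < n \<and> (block j < block i \<or> block j = block i \<and> j < i)}"
    if "j < n" for j
  proof (rule iffI, rule ccontr)
    assume less: "xs ! j < xs ! i"
      and "j \<notin> {j. j < n \<and> (block j < block i \<or> block j = block i \<and> j < i)}"
    then have "\<not> (block j < block i \<or> block j = block i \<and> j < i)" "j \<noteq> i" using that by auto
    then have "block i < block j \<or> block i = block j \<and> i < j" by arith
    then show False using less_if_block_less[of j i] less assms that by auto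
  qed (use less_if_block_less[of i j] assms that in auto)
qed (use assms in auto)

lemma nth_before_a0: "0 < i \<Longrightarrow> i < a0 \<Longrightarrow> xs ! i = i"
proof -
  assume i: "0 < i" "i < a0"
  then have "{j. j < n \<and> (block j < block i \<or> block j = block i \<and> j < i)} = {1..<i}"
    using b0 by (auto simp: block_def)
  then show ?thesis using nth_eq_card_block_less[of i] i b0 by simp
qed

lemma nth_from_a0_before_b0: "a0 \<le> i \<Longrightarrow> i < b0 \<Longrightarrow> xs ! i = i + (n - b0) + 1"
proof -
  assume i: "a0 \<le> i" "i < b0"
  then have "{j. j < n \<and> (block j < block i \<or> block j = block i \<and> j < i)} = {0..<i} \<union> {b0..<n}"
    using b0 after_one by (auto simp: block_def)
  moreover have "card ({0..<i} \<union> {b0..<n}) = i + (n - b0)"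
    using i by (subst card_Un_disjoint) auto
  ultimately show ?thesis using nth_eq_card_block_less[of i] i b0 by simp
qed

lemma nth_from_b0: "b0 \<le> i \<Longrightarrow> i < n \<Longrightarrow> xs ! i = a0 + i - b0"
proof -
  assume i: "b0 \<le> i" "i < n"
  then have "{j. j < n \<and> (block j < block i \<or> block j = block i \<and> j < i)} = {1..<a0} \<union> {b0..<i}"
    using b0 after_one by (auto simp: block_def)
  moreover have "card ({1..<a0} \<union> {b0..<i}) = (a0 - 1) + (i - b0)"
    using i b0 by (subst card_Un_disjoint) auto
  ultimately show ?thesis using nth_eq_card_block_less[of i] i b0 after_one by simp
qed

lemma position_cases:
  obtains "i = 0" | "0 < i" "i < a0" | "a0 \<le> i" "i < b0" | "b0 \<le> i"
  by linarith

lemma fish_A_or_fish_B: "xs \<in> fish_A n \<union> fish_B n"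
proof -
  define m where "m = xs ! 0"
  have m: "m = a0 + (n - b0)" using nth_from_a0_before_b0[of a0] shift b0 by (simp add: m_def)
  have a0: "2 \<le> a0" using after_one one_pos_eq_1 by simp
  show ?thesis
  proof (cases "m + 2 \<le> n")
    case True
    have "xs \<in> fish_B n"
    proof (rule fish_BI)
      show "(m, a0 - 1) \<in> params_B n" using True m a0 b0 by (auto simp: params_B_def)
      show "xs = map (fam_B n m (a0 - 1)) [0..<n]"
      proof (rule xs_eq_map)
        fix i assume "i < n"
        then show "xs ! i = fam_B n m (a0 - 1) i"
          using nth_before_a0[of i] nth_from_a0_before_b0[of i] nth_from_b0[of i] m a0 b0
          by (cases rule: position_cases[of i]) (auto simp: fam_B_def m_def)
      qed
    qed
    then show ?thesis by simp
  next
    case False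
    then have b0_eq: "b0 = a0 + 1" and m_eq: "m = n - 1" using m b0 by auto
    have "xs \<in> fish_A n"
    proof (rule fish_AI)
      show "(m, a0) \<in> params_A n" using m_eq a0 b0 n_ge_3 shift m_def by (auto simp: params_A_def)
      show "xs = map (fam_A n m a0) [0..<n]"
      proof (rule xs_eq_map)
        fix i assume "i < n"
        consider "i = 0" | "0 < i" "i < a0" | "i = a0" | "a0 < i" by linarith
        then show "xs ! i = fam_A n m a0 i"
          using nth_before_a0[of i] nth_from_b0[of i] \<open>i < n\<close> m_eq b0_eq a0 shift b0(2)
          by cases (auto simp: fam_A_def lead_enum_def m_def)
      qed
    qed
    then show ?thesis by simp
  qed
qed

end

context fish_321_1324
begin

lemma in_fish_A_or_fish_B: "xs \<in> fish_A n \<union> fish_B n"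
proof (cases "\<exists>a b. one_pos < a \<and> a < b \<and> b < n \<and> xs ! b < xs ! a")
  case False
  have "xs ! a < xs ! b" if "one_pos < a" "a < b" "b < n" for a b
    using False nth_less_if_not_greater[of a b] that by auto
  then show ?thesis using fish_A_if_increasing_after_one by blast
next
  case True
  then obtain a0 where a0: "one_pos < a0" "\<exists>b. a0 < b \<and> b < n \<and> xs ! b < xs ! a0"
    and least_a0: "\<And>a. a < a0 \<Longrightarrow> \<not> (one_pos < a \<and> (\<exists>b. a < b \<and> b < n \<and> xs ! b < xs ! a))"
    using exists_least_iff[of "\<lambda>a. one_pos < a \<and> (\<exists>b. a < b \<and> b < n \<and> xs ! b < xs ! a)"] by blast
  have "xs ! i < xs ! j" if "one_pos < i" "i < a0" "i < j" "j < n" for i j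
    using least_a0[of i] nth_less_if_not_greater[of i j] that by auto
  then interpret first_descent xs n a0
    using a0 by unfold_locales auto
  show ?thesis
  proof (cases "xs ! a0 = xs ! 0 + 1 \<and> 2 \<le> xs ! 0")
    case True
    obtain b0 where b0: "a0 < b0 \<and> b0 < n \<and> xs ! b0 < xs ! a0"
      and least_b0: "\<And>c. c < b0 \<Longrightarrow> \<not> (a0 < c \<and> c < n \<and> xs ! c < xs ! a0)"
      using descent exists_least_iff[of "\<lambda>b. a0 < b \<and> b < n \<and> xs ! b < xs ! a0"] by blast
    have "xs ! a0 \<le> xs ! c" if "a0 < c" "c < b0" for c
      using least_b0[of c] that b0 by auto
    then interpret successor_descent xs n a0 b0
      using True b0 by unfold_locales auto
    show ?thesis by (rule fish_A_or_fish_B)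
  next
    case False
    then show ?thesis using fish_A_if_max_at_a0[OF nth_a0_eq_n[OF False]] by simp
  qed
qed

end

section \<open>Enumeration\<close>

lemma Fish_321_1324_eq:
  assumes "n \<ge> 3"
  shows "Fish n [[3,2,1],[1,3,2,4]] = fish_A n \<union> fish_B n"
proof
  show "Fish n [[3,2,1],[1,3,2,4]] \<subseteq> fish_A n \<union> fish_B n"
    using fish_321_1324.in_fish_A_or_fish_B[OF fish_321_1324.intro] assms by blast
  show "fish_A n \<union> fish_B n \<subseteq> Fish n [[3,2,1],[1,3,2,4]]"
    using fam_A_in_Fish fam_B_in_Fish unfolding fish_A_def fish_B_def by auto
qed

lemma double_card_Fish_321_1324:
  assumes "n \<ge> 3"
  shows "2 * card (Fish n [[3,2,1],[1,3,2,4]]) = 2 * (n + (n - 2) * (n - 2)) + (n - 4) * (n - 3)"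
proof -
  have "finite (params_A n)" "finite (params_B n)"
    by (rule finite_subset[of _ "{..n} \<times> {..n}"]; auto simp: params_A_def params_B_def)+
  then have "card (Fish n [[3,2,1],[1,3,2,4]]) = card (params_A n) + card (params_B n)"
    using Fish_321_1324_eq[OF assms] fish_A_fish_B_disjoint[OF assms] inj_on_fam_A inj_on_fam_B
    by (simp add: fish_A_def fish_B_def card_Un_disjoint card_image)
  then show ?thesis using card_params_A double_card_params_B by simp
qed

theorem mainTheorem8:
  fixes n :: nat
  assumes "n \<ge> 3"
  shows "real (card (Fish n [[3,2,1],[1,3,2,4]])) = 3/2 * real n ^ 2 - 13/2 * real n + 10"
proof -
  have "real (n - 2) = real n - 2" using assms by simp
  moreover have "real ((n - 4) * (n - 3)) = (real n - 4) * (real n - 3)"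
    using assms by (cases "n = 3") (auto simp: of_nat_diff)
  ultimately have "2 * real (card (Fish n [[3,2,1],[1,3,2,4]])) =
      2 * (real n + (real n - 2) * (real n - 2)) + (real n - 4) * (real n - 3)"
    using arg_cong[OF double_card_Fish_321_1324[OF assms], of real]
    by (simp only: of_nat_add of_nat_mult of_nat_numeral)
  then show ?thesis by (simp add: power2_eq_square algebra_simps)
qed

end
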